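(* $i(\vec P_3)\geq \frac{2}{5}$ and $i(\vec C_4)\geq \frac{2}{21}$.
   Context: An orgraph (oriented graph) is a directed graph with no loops, no multiple edges, and no pair of vertices joined by edges in both directions. For a finite orgraph $\Gamma$ and an integer $n$, let $max(\Gamma;n)$ be the maximum, over all orgraphs $G$ on $n$ vertices, of the number of vertex subsets $T\subseteq V(G)$ with $|T|=|V(\Gamma)|$ such that the subgraph of $G$ induced by $T$ is isomorphic to $\Gamma$ (each such set is counted once, regardless of automorphisms of $\Gamma$). The inducibility of $\Gamma$ is $i(\Gamma):=\limsup_{n\to\infty} max(\Gamma;n)/\binom{n}{|V(\Gamma)|}$. Here $\vec P_3$ is the orgraph on vertices $a,b,c$ with edges $a\to b$ and $b\to c$ only (directed path with 3 vertices), and $\vec C_4$ is the orgraph on vertices $v_1,v_2,v_3,v_4$ with edges $v_1\to v_2$, $v_2\to v_3$, $v_3\to v_4$, $v_4\to v_1$ only (directed 4-cycle). *)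

theory Defs
  imports Complex_Main "HOL-Library.Liminf_Limsup" "HOL-Library.Extended_Real"
begin

definition orgraph :: "nat \<Rightarrow> (nat \<Rightarrow> nat \<Rightarrow> bool) \<Rightarrow> bool" where
  "orgraph n E \<longleftrightarrow> (\<forall>u<n. \<not> E u u) \<and> (\<forall>u<n. \<forall>v<n. E u v \<longrightarrow> \<not> E v u)"

definition induced_iso :: "nat \<Rightarrow> (nat \<Rightarrow> nat \<Rightarrow> bool) \<Rightarrow> (nat \<Rightarrow> nat \<Rightarrow> bool) \<Rightarrow> nat set \<Rightarrow> bool" where
  "induced_iso k F E T \<longleftrightarrow>
     (\<exists>f. bij_betw f {0..<k} T \<and> (\<forall>i<k. \<forall>j<k. F i j \<longleftrightarrow> E (f i) (f j)))"

definition induced_count :: "nat \<Rightarrow> (nat \<Rightarrow> nat \<Rightarrow> bool) \<Rightarrow> nat \<Rightarrow> (nat \<Rightarrow> nat \<Rightarrow> bool) \<Rightarrow> nat" where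
  "induced_count k F n E = card {T. T \<subseteq> {0..<n} \<and> card T = k \<and> induced_iso k F E T}"

definition max_induced :: "nat \<Rightarrow> (nat \<Rightarrow> nat \<Rightarrow> bool) \<Rightarrow> nat \<Rightarrow> nat" where
  "max_induced k F n = Max {induced_count k F n E | E. orgraph n E}"

definition inducibility :: "nat \<Rightarrow> (nat \<Rightarrow> nat \<Rightarrow> bool) \<Rightarrow> ereal" where
  "inducibility k F = limsup (\<lambda>n. ereal (real (max_induced k F n) / real (n choose k)))"

definition P3 :: "nat \<Rightarrow> nat \<Rightarrow> bool" where
  "P3 i j \<longleftrightarrow> (i = 0 \<and> j = 1) \<or> (i = 1 \<and> j = 2)"

definition C4 :: "nat \<Rightarrow> nat \<Rightarrow> bool" where
  "C4 i j \<longleftrightarrow> i < 4 \<and> j = (i + 1) mod 4"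

end

theory Submission
  imports Defs "HOL-Library.FuncSet"
begin

text \<open>The extremal orgraph is the iterated blow-up of the directed 4-cycle: split the vertices
  by residue mod 4, orient all edges between classes cyclically (\<open>r \<rightarrow> r + 1\<close>), and recurse
  inside each class. Let \<open>c(N)\<close> count the induced copies of a \<open>k\<close>-vertex pattern \<open>F\<close> on \<open>N\<close>
  vertices. The copies inside the four classes contribute \<open>4 c(N)\<close> to \<open>c(4N)\<close>. Every embedding
  of \<open>F\<close> as an induced subgraph of the 4-cycle yields \<open>N\<^sup>k\<close> more copies, one vertex in each of
  the classes it uses; \<open>P3\<close> has 4 embeddings with distinct images, \<open>C4\<close> one. The recurrence
  \<open>c(4N) \<ge> 4 c(N) + A N\<^sup>k\<close> gives \<open>(4\<^sup>k - 4) c(N) \<ge> A (N\<^sup>k - N) \<ge> A k! (N choose k)\<close> for powers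
  \<open>N\<close> of 4, so the density is at least \<open>A k! / (4\<^sup>k - 4)\<close>: \<open>24/60 = 2/5\<close> and \<open>24/252 = 2/21\<close>.\<close>

function nested_cycle :: "nat \<Rightarrow> nat \<Rightarrow> bool" where
  "nested_cycle u v =
     (if u = v then False
      else if u mod 4 = v mod 4 then nested_cycle (u div 4) (v div 4)
      else v mod 4 = Suc (u mod 4) mod 4)"
  by auto
termination
  by (relation "measure (\<lambda>(u, v). u + v)") auto

declare nested_cycle.simps [simp del]

lemma Suc_mod_4_neq_self: "a \<noteq> Suc a mod 4" for a :: nat
  by (cases "a < 4") (auto simp: mod_Suc)

lemma Suc_Suc_mod_4_neq_self: "a mod 4 \<noteq> Suc (Suc (a mod 4) mod 4) mod 4" for a :: nat
  by (auto simp: mod_Suc)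

lemma nested_cycle_irrefl: "\<not> nested_cycle u u"
  by (simp add: nested_cycle.simps)

lemma nested_cycle_equal_residues:
  "u mod 4 = v mod 4 \<Longrightarrow> nested_cycle u v = nested_cycle (u div 4) (v div 4)"
  by (subst nested_cycle.simps) (auto simp: nested_cycle_irrefl)

lemma nested_cycle_distinct_residues:
  "u mod 4 \<noteq> v mod 4 \<Longrightarrow> nested_cycle u v \<longleftrightarrow> v mod 4 = Suc (u mod 4) mod 4"
  by (subst nested_cycle.simps) auto

lemma nested_cycle_asym: "nested_cycle u v \<Longrightarrow> \<not> nested_cycle v u"
proof (induction u v rule: nested_cycle.induct)
  case (1 u v)
  show ?case
  proof (cases "u mod 4 = v mod 4")
    case True
    with "1.prems" have "u \<noteq> v" "nested_cycle (u div 4) (v div 4)"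
      using nested_cycle_irrefl nested_cycle_equal_residues[of u v] by auto
    with True "1.IH" show ?thesis
      using nested_cycle_equal_residues[of v u] by simp
  next
    case False
    with "1.prems" have "v mod 4 = Suc (u mod 4) mod 4"
      using nested_cycle_distinct_residues by blast
    then have "u mod 4 \<noteq> Suc (v mod 4) mod 4" using Suc_Suc_mod_4_neq_self[of u] by simp
    with False show ?thesis using nested_cycle_distinct_residues[of v u] by simp
  qed
qed

lemma orgraph_nested_cycle: "orgraph n nested_cycle"
  unfolding orgraph_def using nested_cycle_irrefl nested_cycle_asym by blast

lemma nested_cycle_same_residue: "i < 4 \<Longrightarrow> nested_cycle (4 * x + i) (4 * y + i) = nested_cycle x y"
  using nested_cycle_equal_residues[of "4 * x + i" "4 * y + i"] by simp

definition induced_copies :: "nat \<Rightarrow> (nat \<Rightarrow> nat \<Rightarrow> bool) \<Rightarrow> nat \<Rightarrow> nat set set" where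
  "induced_copies k F N = {T. T \<subseteq> {0..<N} \<and> card T = k \<and> induced_iso k F nested_cycle T}"

lemma finite_induced_copies: "finite (induced_copies k F N)"
  by (rule finite_subset[of _ "Pow {0..<N}"]) (auto simp: induced_copies_def)

lemma induced_count_le_max_induced:
  assumes "orgraph n E"
  shows "induced_count k F n E \<le> max_induced k F n"
proof -
  have bound: "induced_count k F n E' \<le> n choose k" for E'
  proof -
    have "induced_count k F n E' \<le> card {T. T \<subseteq> {0..<n} \<and> card T = k}"
      unfolding induced_count_def
      by (rule card_mono) (auto intro: finite_subset[of _ "Pow {0..<n}"])
    also have "\<dots> = n choose k" using n_subsets[of "{0..<n}" k] by simp
    finally show ?thesis .
  qed
  have fin: "finite {induced_count k F n E | E. orgraph n E}"
    by (rule finite_subset[of _ "{..n choose k}"]) (use bound in auto)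
  show ?thesis
    unfolding max_induced_def by (rule Max_ge[OF fin]) (use assms in blast)
qed

lemma card_induced_copies_le_max_induced: "card (induced_copies k F N) \<le> max_induced k F N"
  using induced_count_le_max_induced[OF orgraph_nested_cycle]
  by (simp add: induced_count_def induced_copies_def)

definition shift :: "nat \<Rightarrow> nat set \<Rightarrow> nat set" where
  "shift i T = (\<lambda>x. 4 * x + i) ` T"

lemma inj_on_shift: "inj_on (shift i) A"
  unfolding shift_def by (rule inj_on_image) (auto simp: inj_on_def)

lemma residue_shift: "i < 4 \<Longrightarrow> y \<in> shift i T \<Longrightarrow> y mod 4 = i"
  by (auto simp: shift_def)

lemma shift_induced_copies:
  assumes "i < 4" "T \<in> induced_copies k F N"
  shows "shift i T \<in> induced_copies k F (4 * N)"
proof -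
  obtain f where f: "bij_betw f {0..<k} T" "\<forall>p<k. \<forall>q<k. F p q \<longleftrightarrow> nested_cycle (f p) (f q)"
    using assms(2) unfolding induced_copies_def induced_iso_def by blast
  have "bij_betw (\<lambda>x. 4 * x + i) T (shift i T)"
    unfolding shift_def by (rule bij_betw_imageI) (auto simp: inj_on_def)
  with f(1) have "bij_betw ((\<lambda>x. 4 * x + i) \<circ> f) {0..<k} (shift i T)"
    by (rule bij_betw_trans)
  moreover have "\<forall>p<k. \<forall>q<k. F p q \<longleftrightarrow> nested_cycle (4 * f p + i) (4 * f q + i)"
    using f(2) nested_cycle_same_residue[OF assms(1)] by simp
  ultimately have "induced_iso k F nested_cycle (shift i T)"
    unfolding induced_iso_def comp_def by blast
  moreover have "card (shift i T) = card T"
    by (simp add: shift_def card_image inj_on_def)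
  moreover have "shift i T \<subseteq> {0..<4 * N}"
    using assms unfolding shift_def induced_copies_def by force
  ultimately show ?thesis using assms(2) by (simp add: induced_copies_def)
qed

text \<open>The residue condition on \<open>B\<close> separates it from the copies lying inside one residue
  class, which come from the four shifted copies of the graph on \<open>N\<close> vertices.\<close>

lemma card_induced_copies_blowup:
  assumes "0 < k" "B \<subseteq> induced_copies k F (4 * N)"
    and "\<And>T. T \<in> B \<Longrightarrow> 2 \<le> card ((\<lambda>y. y mod 4) ` T)"
  shows "4 * card (induced_copies k F N) + card B \<le> card (induced_copies k F (4 * N))"
proof -
  let ?C = "induced_copies k F N"
  define L where "L = (\<Union>i<4. shift i ` ?C)"
  have nonempty: "T \<noteq> {}" if "T \<in> ?C" for T
    using that assms(1) by (auto simp: induced_copies_def)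
  have "card L = (\<Sum>i<4. card (shift i ` ?C))"
    unfolding L_def
  proof (rule card_UN_disjoint)
    show "\<forall>i\<in>{..<4}. \<forall>j\<in>{..<4}. i \<noteq> j \<longrightarrow> shift i ` ?C \<inter> shift j ` ?C = {}"
    proof (intro ballI impI)
      fix i j :: nat assume ij: "i \<in> {..<4}" "j \<in> {..<4}" "i \<noteq> j"
      show "shift i ` ?C \<inter> shift j ` ?C = {}"
      proof (rule ccontr)
        assume "shift i ` ?C \<inter> shift j ` ?C \<noteq> {}"
        then obtain T T' where T: "T \<in> ?C" "shift i T = shift j T'" by blast
        obtain x where "x \<in> T" using nonempty[OF T(1)] by blast
        then have "4 * x + i \<in> shift j T'" using T(2) unfolding shift_def by blast
        then show False using ij residue_shift[of j "4 * x + i" T'] by simp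
      qed
    qed
  qed (simp_all add: finite_induced_copies)
  also have "\<dots> = 4 * card ?C"
    by (simp add: card_image inj_on_shift)
  finally have card_L: "card L = 4 * card ?C" .
  have "L \<subseteq> induced_copies k F (4 * N)"
    unfolding L_def using shift_induced_copies by blast
  with assms(2) have "L \<union> B \<subseteq> induced_copies k F (4 * N)" by blast
  moreover have "L \<inter> B = {}"
  proof -
    have "card ((\<lambda>y. y mod 4) ` S) \<le> 1" if "S \<in> L" for S
    proof -
      obtain i T where "i < 4" "S = shift i T" using \<open>S \<in> L\<close> by (auto simp: L_def)
      then have "(\<lambda>y. y mod 4) ` S \<subseteq> {i}" using residue_shift by blast
      then show ?thesis by (simp add: card_mono[of "{i}", simplified])
    qed
    with assms(3) show ?thesis by fastforce
  qed
  moreover have "finite L" "finite B"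
    using \<open>L \<subseteq> _\<close> assms(2) finite_induced_copies by (auto intro: finite_subset)
  ultimately have "card L + card B \<le> card (induced_copies k F (4 * N))"
    using card_Un_disjoint[of L B] card_mono[OF finite_induced_copies] by metis
  then show ?thesis using card_L by simp
qed

definition C4_embedding :: "nat \<Rightarrow> (nat \<Rightarrow> nat \<Rightarrow> bool) \<Rightarrow> (nat \<Rightarrow> nat) \<Rightarrow> bool" where
  "C4_embedding k F \<rho> \<longleftrightarrow>
     inj_on \<rho> {0..<k} \<and> (\<forall>p<k. \<rho> p < 4) \<and> (\<forall>p<k. \<forall>q<k. F p q \<longleftrightarrow> \<rho> q = Suc (\<rho> p) mod 4)"

definition transversal :: "nat \<Rightarrow> (nat \<Rightarrow> nat) \<Rightarrow> (nat \<Rightarrow> nat) \<Rightarrow> nat set" where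
  "transversal k \<rho> x = (\<lambda>p. 4 * x p + \<rho> p) ` {0..<k}"

definition transversals :: "nat \<Rightarrow> (nat \<Rightarrow> nat) \<Rightarrow> nat \<Rightarrow> nat set set" where
  "transversals k \<rho> N = transversal k \<rho> ` ({0..<k} \<rightarrow>\<^sub>E {0..<N})"

lemma residues_transversal:
  assumes "\<forall>p<k. \<rho> p < 4"
  shows "(\<lambda>y. y mod 4) ` transversal k \<rho> x = \<rho> ` {0..<k}"
  using assms by (force simp: transversal_def image_image intro: image_cong)

lemma transversal_induced_copy:
  assumes emb: "C4_embedding k F \<rho>" and x: "x \<in> {0..<k} \<rightarrow>\<^sub>E {0..<N}"
  shows "transversal k \<rho> x \<in> induced_copies k F (4 * N)"
proof -
  let ?f = "\<lambda>p. 4 * x p + \<rho> p"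
  have res: "?f p mod 4 = \<rho> p" if "p < k" for p
    using emb that by (simp add: C4_embedding_def)
  have "inj_on ?f {0..<k}"
  proof (rule inj_onI)
    fix p q assume "p \<in> {0..<k}" "q \<in> {0..<k}" "?f p = ?f q"
    then have "\<rho> p = \<rho> q" using res by (metis atLeastLessThan_iff)
    with emb \<open>p \<in> {0..<k}\<close> \<open>q \<in> {0..<k}\<close> show "p = q" by (simp add: C4_embedding_def inj_on_def)
  qed
  then have bij: "bij_betw ?f {0..<k} (transversal k \<rho> x)"
    unfolding transversal_def by (rule inj_on_imp_bij_betw)
  have "F p q \<longleftrightarrow> nested_cycle (?f p) (?f q)" if "p < k" "q < k" for p q
  proof (cases "p = q")
    case True
    with emb that show ?thesis by (simp add: C4_embedding_def nested_cycle_irrefl Suc_mod_4_neq_self)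
  next
    case False
    with emb that have "\<rho> p \<noteq> \<rho> q" by (auto simp: C4_embedding_def inj_on_def)
    with emb that show ?thesis
      using nested_cycle_distinct_residues[of "?f p" "?f q"] res by (simp add: C4_embedding_def)
  qed
  with bij have "induced_iso k F nested_cycle (transversal k \<rho> x)"
    unfolding induced_iso_def by blast
  moreover have "transversal k \<rho> x \<subseteq> {0..<4 * N}"
    using emb x by (force simp: C4_embedding_def transversal_def PiE_iff)
  ultimately show ?thesis
    using bij_betw_same_card[OF bij] by (simp add: induced_copies_def)
qed

lemma card_transversals:
  assumes "inj_on \<rho> {0..<k}" "\<forall>p<k. \<rho> p < 4"
  shows "card (transversals k \<rho> N) = N ^ k"
proof -
  have "inj_on (transversal k \<rho>) ({0..<k} \<rightarrow>\<^sub>E {0..<N})"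
  proof (rule inj_onI)
    fix x y assume x: "x \<in> {0..<k} \<rightarrow>\<^sub>E {0..<N}" and y: "y \<in> {0..<k} \<rightarrow>\<^sub>E {0..<N}"
      and eq: "transversal k \<rho> x = transversal k \<rho> y"
    show "x = y"
    proof (rule PiE_ext[OF x y])
      fix p assume p: "p \<in> {0..<k}"
      then have "4 * x p + \<rho> p \<in> transversal k \<rho> y"
        using eq unfolding transversal_def by blast
      then obtain q where q: "q < k" "4 * x p + \<rho> p = 4 * y q + \<rho> q"
        unfolding transversal_def by auto
      then have "(4 * x p + \<rho> p) mod 4 = (4 * y q + \<rho> q) mod 4" by simp
      then have "\<rho> p = \<rho> q" using assms(2) p q(1) by simp
      with assms(1) p q have "p = q" by (auto simp: inj_on_def)
      with q show "x p = y p" by simp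
    qed
  qed
  then show ?thesis
    by (simp add: transversals_def card_image card_PiE)
qed

lemma transversals_disjoint:
  assumes "\<forall>p<k. \<rho> p < 4" "\<forall>p<k. \<sigma> p < 4" "\<rho> ` {0..<k} \<noteq> \<sigma> ` {0..<k}"
  shows "transversals k \<rho> N \<inter> transversals k \<sigma> N = {}"
proof (rule ccontr)
  assume "transversals k \<rho> N \<inter> transversals k \<sigma> N \<noteq> {}"
  then obtain x y where "transversal k \<rho> x = transversal k \<sigma> y"
    unfolding transversals_def by blast
  then have "(\<lambda>z. z mod 4) ` transversal k \<rho> x = (\<lambda>z. z mod 4) ` transversal k \<sigma> y"
    by (rule arg_cong)
  with assms show False by (simp only: residues_transversal)
qed

lemma transversals_induced_copies:
  assumes "C4_embedding k F \<rho>"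
  shows "transversals k \<rho> N \<subseteq> induced_copies k F (4 * N)"
  using transversal_induced_copy[OF assms] by (auto simp: transversals_def)

lemma card_residues_transversal:
  assumes "C4_embedding k F \<rho>"
  shows "card ((\<lambda>y. y mod 4) ` transversal k \<rho> x) = k"
  using assms residues_transversal[of k \<rho>] by (simp add: C4_embedding_def card_image)

lemma C4_embedding_P3:
  assumes "i < 4"
  shows "C4_embedding 3 P3 (\<lambda>p. (i + p) mod 4)"
proof -
  have all_3: "(\<forall>p<3. P p) \<longleftrightarrow> P 0 \<and> P 1 \<and> P (2::nat)" for P
    by (auto simp: less_Suc_eq numeral_eq_Suc)
  have "i = 0 \<or> i = 1 \<or> i = 2 \<or> i = 3" using assms by auto
  moreover have "{0..<3::nat} = {0, 1, 2}" by auto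
  ultimately show ?thesis unfolding C4_embedding_def inj_on_def
    by (elim disjE) (simp_all add: all_3 P3_def)
qed

lemma C4_embedding_C4: "C4_embedding 4 C4 (\<lambda>p. p)"
  by (simp add: C4_embedding_def C4_def)

lemma rotation_P3_misses:
  fixes i j :: nat
  assumes "i < 4" "j < 4"
  shows "(i + 3) mod 4 \<in> (\<lambda>p. (j + p) mod 4) ` {0..<3} \<longleftrightarrow> i \<noteq> j"
proof -
  have "i = 0 \<or> i = 1 \<or> i = 2 \<or> i = 3" "j = 0 \<or> j = 1 \<or> j = 2 \<or> j = 3" using assms by auto
  moreover have "{0..<3::nat} = {0, 1, 2}" by auto
  ultimately show ?thesis by (elim disjE) simp_all
qed

lemma P3_recurrence:
  "4 * card (induced_copies 3 P3 N) + 4 * N ^ 3 \<le> card (induced_copies 3 P3 (4 * N))"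
proof -
  let ?\<rho> = "\<lambda>i p. (i + p) mod 4"
  define B where "B = (\<Union>i<4. transversals 3 (?\<rho> i) N)"
  have emb: "C4_embedding 3 P3 (?\<rho> i)" if "i < 4" for i
    using C4_embedding_P3[OF that] .
  have "card B = (\<Sum>i<4. card (transversals 3 (?\<rho> i) N))"
    unfolding B_def
  proof (rule card_UN_disjoint)
    show "\<forall>i\<in>{..<4}. \<forall>j\<in>{..<4}. i \<noteq> j \<longrightarrow>
        transversals 3 (?\<rho> i) N \<inter> transversals 3 (?\<rho> j) N = {}"
    proof (intro ballI impI transversals_disjoint)
      fix i j :: nat assume "i \<in> {..<4}" "j \<in> {..<4}" "i \<noteq> j"
      then show "?\<rho> i ` {0..<3} \<noteq> ?\<rho> j ` {0..<3}"
        using rotation_P3_misses[of i i] rotation_P3_misses[of i j] by auto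
    qed auto
  qed (simp_all add: transversals_def finite_PiE)
  also have "\<dots> = 4 * N ^ 3"
    using emb by (simp add: card_transversals C4_embedding_def)
  finally have "card B = 4 * N ^ 3" .
  moreover have "B \<subseteq> induced_copies 3 P3 (4 * N)"
    unfolding B_def using transversals_induced_copies[OF emb] by blast
  moreover have "2 \<le> card ((\<lambda>y. y mod 4) ` T)" if "T \<in> B" for T
    using that card_residues_transversal[OF emb] by (auto simp: B_def transversals_def)
  ultimately show ?thesis
    using card_induced_copies_blowup[of 3 B P3 N] by simp
qed

lemma C4_recurrence:
  "4 * card (induced_copies 4 C4 N) + N ^ 4 \<le> card (induced_copies 4 C4 (4 * N))"
proof -
  let ?B = "transversals 4 (\<lambda>p. p) N"
  have "2 \<le> card ((\<lambda>y. y mod 4) ` T)" if "T \<in> ?B" for T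
    using that card_residues_transversal[OF C4_embedding_C4] by (auto simp: transversals_def)
  then show ?thesis
    using card_induced_copies_blowup[of 4 ?B C4 N] transversals_induced_copies[OF C4_embedding_C4]
      card_transversals[of "\<lambda>p. p" 4 N] by simp
qed

lemma recurrence_lower_bound:
  fixes c :: "nat \<Rightarrow> nat"
  assumes "1 \<le> k" and rec: "\<And>N. 4 * c N + A * N ^ k \<le> c (4 * N)"
  shows "A * (4 ^ j) ^ k \<le> (4 ^ k - 4) * c (4 ^ j) + A * 4 ^ j"
proof (induction j)
  case 0
  then show ?case by simp
next
  case (Suc j)
  define N where "N = (4::nat) ^ j"
  define d where "d = (4::nat) ^ k - 4"
  have "(4::nat) \<le> 4 ^ k" using assms(1) by (simp add: self_le_power)
  then have d4: "4 ^ k = d + 4" by (simp add: d_def)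
  have "A * (4 * N) ^ k = (d + 4) * (A * N ^ k)"
    by (simp only: power_mult_distrib flip: d4) simp
  also have "\<dots> = 4 * (A * N ^ k) + d * (A * N ^ k)"
    by (simp add: algebra_simps)
  also have "\<dots> \<le> 4 * (d * c N + A * N) + d * (A * N ^ k)"
    using Suc.IH by (simp add: N_def d_def)
  also have "\<dots> = d * (4 * c N + A * N ^ k) + A * (4 * N)"
    by (simp add: algebra_simps)
  also have "\<dots> \<le> d * c (4 * N) + A * (4 * N)"
    using rec by simp
  finally show ?case by (simp add: N_def d_def)
qed

lemma power_add_one_le: "1 \<le> m \<Longrightarrow> a ^ m + 1 \<le> (a + 1 :: nat) ^ m"
proof (induction m rule: dec_induct)
  case (step m)
  have "a ^ Suc m + 1 \<le> (a + 1) * (a ^ m + 1)" by (simp add: algebra_simps)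
  also have "\<dots> \<le> (a + 1) * (a + 1) ^ m" using step.IH by (rule mult_left_mono) simp
  finally show ?case by simp
qed simp

lemma fact_mult_choose_add_le_power:
  assumes "2 \<le> k"
  shows "fact k * (n choose k) + n \<le> n ^ k"
proof (cases n)
  case 0
  then show ?thesis using assms by (simp add: power_0_left)
next
  case (Suc m)
  obtain l where k: "k = Suc l" and "1 \<le> l" using assms by (cases k) auto
  have "fact k * (n choose k) = fact l * (k * (n choose k))"
    by (simp add: k algebra_simps del: binomial_Suc_Suc)
  also have "\<dots> = n * ((m choose l) * fact l)"
    using times_binomial_minus1_eq[of k n] by (simp add: k Suc algebra_simps del: binomial_Suc_Suc)
  also have "\<dots> \<le> n * m ^ l" using binomial_fact_pow[of m l] by simp
  finally have "fact k * (n choose k) + n \<le> n * (m ^ l + 1)" by simp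
  also have "\<dots> \<le> n * n ^ l"
    using power_add_one_le[OF \<open>1 \<le> l\<close>, of m] by (intro mult_le_mono2) (simp add: Suc)
  finally show ?thesis by (simp add: k)
qed

lemma density_lower_bound_at_powers_of_4:
  assumes "2 \<le> k"
    and rec: "\<And>N. 4 * card (induced_copies k F N) + A * N ^ k \<le> card (induced_copies k F (4 * N))"
    and N: "N = 4 ^ j" "k \<le> N"
  shows "real A * fact k / (4 ^ k - 4) \<le> real (max_induced k F N) / real (N choose k)"
proof -
  have "A * (fact k * (N choose k) + N) \<le> A * N ^ k"
    using fact_mult_choose_add_le_power[OF assms(1)] by simp
  also have "\<dots> \<le> (4 ^ k - 4) * card (induced_copies k F N) + A * N"
    using recurrence_lower_bound[of k "\<lambda>N. card (induced_copies k F N)" A j] assms(1) rec N(1)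
    by simp
  also have "\<dots> \<le> (4 ^ k - 4) * max_induced k F N + A * N"
    using card_induced_copies_le_max_induced by simp
  finally have "A * fact k * (N choose k) \<le> (4 ^ k - 4) * max_induced k F N"
    by (simp add: algebra_simps)
  then have "real A * fact k * real (N choose k) \<le> real (4 ^ k - 4) * real (max_induced k F N)"
    by (metis of_nat_fact of_nat_le_iff of_nat_mult)
  moreover have "(16::nat) \<le> 4 ^ k"
    using power_increasing[OF assms(1), of "4::nat"] by simp
  then have "real (4 ^ k - 4) = 4 ^ k - 4" by (simp add: of_nat_diff)
  moreover have "(16::real) \<le> 4 ^ k"
    using power_increasing[OF assms(1), of "4::real"] by simp
  then have "(0::real) < 4 ^ k - 4" by simp
  moreover have "0 < real (N choose k)" using N(2) by simp
  ultimately show ?thesis by (simp add: divide_simps mult.commute mult.left_commute)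
qed

lemma inducibility_ge_of_recurrence:
  assumes "2 \<le> k"
    and "\<And>N. 4 * card (induced_copies k F N) + A * N ^ k \<le> card (induced_copies k F (4 * N))"
  shows "ereal (real A * fact k / (4 ^ k - 4)) \<le> inducibility k F"
proof -
  let ?ratio = "\<lambda>n. ereal (real (max_induced k F n) / real (n choose k))"
  have "k \<le> 4 ^ (k + j)" for j
  proof -
    have "k < 2 ^ k" by (rule less_exp)
    also have "\<dots> \<le> 4 ^ k" by (simp add: power_mono)
    also have "\<dots> \<le> 4 ^ (k + j)" by (simp add: power_increasing)
    finally show ?thesis by simp
  qed
  then have "ereal (real A * fact k / (4 ^ k - 4)) \<le> limsup (?ratio \<circ> (\<lambda>j. 4 ^ (k + j)))"
    using density_lower_bound_at_powers_of_4[OF assms] by (intro le_Limsup) auto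
  also have "\<dots> \<le> limsup ?ratio"
    by (rule limsup_subseq_mono) (simp add: strict_mono_def power_strict_increasing)
  finally show ?thesis unfolding inducibility_def .
qed

theorem mainTheorem1:
  shows "inducibility 3 P3 \<ge> ereal (2/5) \<and> inducibility 4 C4 \<ge> ereal (2/21)"
proof
  show "inducibility 3 P3 \<ge> ereal (2/5)"
    using inducibility_ge_of_recurrence[OF _ P3_recurrence] by (simp add: fact_numeral)
  show "inducibility 4 C4 \<ge> ereal (2/21)"
    using inducibility_ge_of_recurrence[where A = 1 and k = 4 and F = C4] C4_recurrence by (simp add: fact_numeral)
qed

end
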